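(* Let $(Q,\cdot)$ be a quadratical quasigroup, $a,b\in Q$ distinct, and $t$ a positive integer. Then $t1,t3,t4,t2$ are four distinct elements and $t1\cdot t3=t3\cdot t4=t4\cdot t2=t2\cdot t1=aba$; that is, $(t1,t3,t4,t2)$ is a $4$-cycle based on $aba$.
   Context: A quadratical quasigroup is a quasigroup satisfying $xy\cdot x=zx\cdot yz$ (equivalently, a groupoid satisfying $x\cdot x=x$, $yx\cdot xy=x$, $xy\cdot zw=xz\cdot yw$). $aba$ denotes $ab\cdot a$. The elements $tk$ are defined by $11=a$, $12=ab$, $13=ba$, $14=b$ and, for $n\ge2$, $n1=(n-1)1\cdot(n-1)2$, $n2=(n-1)2\cdot(n-1)4$, $n3=(n-1)3\cdot(n-1)1$, $n4=(n-1)4\cdot(n-1)3$. An ($n$-)cycle based on $c$ is a sequence $x_1,\dots,x_n$ of distinct elements with $x_1x_2=x_2x_3=\dots=x_{n-1}x_n=x_nx_1=c$. *)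

theory Defs
  imports Main
begin

definition quasigroup :: "'a set \<Rightarrow> ('a \<Rightarrow> 'a \<Rightarrow> 'a) \<Rightarrow> bool" where
  "quasigroup Q m \<longleftrightarrow>
     (\<forall>x\<in>Q. \<forall>y\<in>Q. m x y \<in> Q) \<and>
     (\<forall>a\<in>Q. \<forall>b\<in>Q. (\<exists>!x. x \<in> Q \<and> m a x = b) \<and> (\<exists>!y. y \<in> Q \<and> m y a = b))"

definition quadratical :: "'a set \<Rightarrow> ('a \<Rightarrow> 'a \<Rightarrow> 'a) \<Rightarrow> bool" where
  "quadratical Q m \<longleftrightarrow> quasigroup Q m \<and>
     (\<forall>x\<in>Q. \<forall>y\<in>Q. \<forall>z\<in>Q. m (m x y) x = m (m z x) (m y z))"

text \<open>The elements tk: tel m a b n = (n1, n2, n3, n4) for n \<ge> 1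
  (index n = 0 is unused and coincides with the case n = 1).\<close>
fun tel :: "('a \<Rightarrow> 'a \<Rightarrow> 'a) \<Rightarrow> 'a \<Rightarrow> 'a \<Rightarrow> nat \<Rightarrow> 'a \<times> 'a \<times> 'a \<times> 'a" where
  "tel m a b 0 = (a, m a b, m b a, b)"
| "tel m a b (Suc 0) = (a, m a b, m b a, b)"
| "tel m a b (Suc (Suc n)) =
     (case tel m a b (Suc n) of (x1, x2, x3, x4) \<Rightarrow>
        (m x1 x2, m x2 x4, m x3 x1, m x4 x3))"

definition t1 where "t1 m a b n = fst (tel m a b n)"
definition t2 where "t2 m a b n = fst (snd (tel m a b n))"
definition t3 where "t3 m a b n = fst (snd (snd (tel m a b n)))"
definition t4 where "t4 m a b n = snd (snd (snd (tel m a b n)))"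

definition cycle_based_on :: "('a \<Rightarrow> 'a \<Rightarrow> 'a) \<Rightarrow> 'a list \<Rightarrow> 'a \<Rightarrow> bool" where
  "cycle_based_on m xs c \<longleftrightarrow> xs \<noteq> [] \<and> distinct xs \<and>
     (\<forall>i < length xs. m (xs ! i) (xs ! ((i + 1) mod length xs)) = c)"

end

theory Submission
  imports Defs
begin

text \<open>
  In a quadratical quasigroup the exchange law \<open>xy\<cdot>zx = xz\<cdot>yx\<close> holds. Hence if
  \<open>p, q, r, s\<close> satisfy \<open>pq = qr = rs = sp = c\<close>, then so do \<open>ps, qp, rq, sr\<close>: for instance
  \<open>ps\<cdot>qp = pq\<cdot>sp = cc = c\<close>. Starting from \<open>a, ba, b, ab\<close>, which satisfy these equations
  with \<open>c = aba\<close>, this map produces exactly \<open>t1, t3, t4, t2\<close> at every level. Distinctness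
  follows from idempotency and from the fact that commuting elements are equal, once
  one knows that the first element is never \<open>c\<close>; this is preserved because \<open>ps = c = sp\<close>
  would force \<open>p = s\<close> and then \<open>p = pp = c\<close>.
\<close>

lemma cycle_based_on_4:
  "cycle_based_on m [p, q, r, s] c \<longleftrightarrow>
     distinct [p, q, r, s] \<and> m p q = c \<and> m q r = c \<and> m r s = c \<and> m s p = c"
  unfolding cycle_based_on_def by (simp add: All_less_Suc2 conj_commute conj_left_commute)

lemma t_Suc_Suc:
  "t1 m a b (Suc (Suc n)) = m (t1 m a b (Suc n)) (t2 m a b (Suc n))"
  "t2 m a b (Suc (Suc n)) = m (t2 m a b (Suc n)) (t4 m a b (Suc n))"
  "t3 m a b (Suc (Suc n)) = m (t3 m a b (Suc n)) (t1 m a b (Suc n))"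
  "t4 m a b (Suc (Suc n)) = m (t4 m a b (Suc n)) (t3 m a b (Suc n))"
  by (simp_all add: t1_def t2_def t3_def t4_def split: prod.split)

locale quadratical_quasigroup =
  fixes Q :: "'a set" and m :: "'a \<Rightarrow> 'a \<Rightarrow> 'a" (infixl "\<cdot>" 70)
  assumes quadratical: "quadratical Q m"
begin

lemma closed: "x \<in> Q \<Longrightarrow> y \<in> Q \<Longrightarrow> x \<cdot> y \<in> Q"
  using quadratical unfolding quadratical_def quasigroup_def by blast

lemma left_cancel: "a \<in> Q \<Longrightarrow> x \<in> Q \<Longrightarrow> y \<in> Q \<Longrightarrow> a \<cdot> x = a \<cdot> y \<Longrightarrow> x = y"
  using quadratical closed unfolding quadratical_def quasigroup_def by metis

lemma right_cancel: "a \<in> Q \<Longrightarrow> x \<in> Q \<Longrightarrow> y \<in> Q \<Longrightarrow> x \<cdot> a = y \<cdot> a \<Longrightarrow> x = y"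
  using quadratical closed unfolding quadratical_def quasigroup_def by metis

lemma quadratical_law: "x \<in> Q \<Longrightarrow> y \<in> Q \<Longrightarrow> z \<in> Q \<Longrightarrow> x \<cdot> y \<cdot> x = z \<cdot> x \<cdot> (y \<cdot> z)"
  using quadratical unfolding quadratical_def by blast

lemma idem: assumes "x \<in> Q" shows "x \<cdot> x = x"
proof -
  have "x \<cdot> x \<cdot> x = x \<cdot> x \<cdot> (x \<cdot> x)"
    using quadratical_law[OF assms assms assms] .
  then show ?thesis
    using left_cancel[OF closed[OF assms assms] assms closed[OF assms assms]] by simp
qed

lemma flexible: "x \<in> Q \<Longrightarrow> y \<in> Q \<Longrightarrow> x \<cdot> y \<cdot> x = x \<cdot> (y \<cdot> x)"
  using quadratical_law[of x y x] idem[of x] by simp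

lemma mul_swap_mul: "x \<in> Q \<Longrightarrow> y \<in> Q \<Longrightarrow> y \<cdot> x \<cdot> (x \<cdot> y) = x"
  using quadratical_law[of x x y] idem[of x] by simp

lemma commute_imp_eq: "x \<in> Q \<Longrightarrow> y \<in> Q \<Longrightarrow> x \<cdot> y = y \<cdot> x \<Longrightarrow> x = y"
  using mul_swap_mul[of x y] mul_swap_mul[of y x] by simp

lemma mul_rotate: assumes "x \<in> Q" "y \<in> Q" shows "x \<cdot> (y \<cdot> x) = y \<cdot> x \<cdot> y"
  using flexible[OF closed[OF assms(2,1)] closed[OF assms]] mul_swap_mul[OF assms]
    mul_swap_mul[OF assms(2,1)] by simp

lemma exchange:
  assumes "x \<in> Q" "y \<in> Q" "z \<in> Q"
  shows "x \<cdot> y \<cdot> (z \<cdot> x) = x \<cdot> z \<cdot> (y \<cdot> x)"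
proof -
  have "x \<cdot> y \<cdot> (z \<cdot> x) = y \<cdot> z \<cdot> y" using quadratical_law[of y z x] assms by simp
  also have "\<dots> = y \<cdot> (z \<cdot> y)" using flexible assms by simp
  also have "\<dots> = z \<cdot> y \<cdot> z" using mul_rotate assms by simp
  also have "\<dots> = x \<cdot> z \<cdot> (y \<cdot> x)" using quadratical_law[of z y x] assms by simp
  finally show ?thesis .
qed

lemma base_left_cancel: "c \<in> Q \<Longrightarrow> y \<in> Q \<Longrightarrow> c \<cdot> y = c \<Longrightarrow> y = c"
  using left_cancel[of c y c] idem[of c] by simp

definition cyclic_quadruple :: "'a \<Rightarrow> 'a \<Rightarrow> 'a \<Rightarrow> 'a \<Rightarrow> 'a \<Rightarrow> bool" where
  "cyclic_quadruple c p q r s \<longleftrightarrow> {p, q, r, s} \<subseteq> Q \<and>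
     p \<cdot> q = c \<and> q \<cdot> r = c \<and> r \<cdot> s = c \<and> s \<cdot> p = c"

lemma cyclic_quadruple_distinct:
  assumes cq: "cyclic_quadruple c p q r s" and "p \<noteq> c"
  shows "distinct [p, q, r, s]"
proof -
  have Q: "p \<in> Q" "q \<in> Q" "r \<in> Q" "s \<in> Q"
    and pq: "p \<cdot> q = c" and qr: "q \<cdot> r = c" and rs: "r \<cdot> s = c" and sp: "s \<cdot> p = c"
    using cq unfolding cyclic_quadruple_def by auto
  have c: "c \<in> Q" using pq closed Q by blast
  have "s \<noteq> c" using base_left_cancel[OF c Q(1)] sp \<open>p \<noteq> c\<close> by blast
  then have "r \<noteq> c" using base_left_cancel[OF c Q(4)] rs by blast
  then have "q \<noteq> c" using base_left_cancel[OF c Q(3)] qr by blast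
  have adjacent: "p \<noteq> q" "q \<noteq> r" "r \<noteq> s" "s \<noteq> p"
    using pq qr rs sp idem Q \<open>p \<noteq> c\<close> \<open>q \<noteq> c\<close> \<open>r \<noteq> c\<close> \<open>s \<noteq> c\<close> by auto
  moreover have "p \<noteq> r" "q \<noteq> s"
    using commute_imp_eq[OF Q(1,2)] commute_imp_eq[OF Q(2,3)] pq qr rs adjacent by auto
  ultimately show ?thesis by auto
qed

lemma cyclic_quadruple_step:
  assumes "cyclic_quadruple c p q r s"
  shows "cyclic_quadruple c (p \<cdot> s) (q \<cdot> p) (r \<cdot> q) (s \<cdot> r)"
proof -
  have Q: "p \<in> Q" "q \<in> Q" "r \<in> Q" "s \<in> Q"
    using assms unfolding cyclic_quadruple_def by auto
  then have "c \<cdot> c = c" using assms idem closed unfolding cyclic_quadruple_def by metis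
  then show ?thesis
    using assms exchange[of p s q] exchange[of q p r] exchange[of r q s] exchange[of s r p] Q closed
    unfolding cyclic_quadruple_def by auto
qed

lemma cyclic_quadruple_step_ne:
  assumes cq: "cyclic_quadruple c p q r s" and "p \<noteq> c"
  shows "p \<cdot> s \<noteq> c"
proof
  assume "p \<cdot> s = c"
  then have "p = s"
    using cq commute_imp_eq unfolding cyclic_quadruple_def by auto
  then show False
    using cq \<open>p \<noteq> c\<close> idem unfolding cyclic_quadruple_def by auto
qed

lemma cyclic_quadruple_init:
  assumes a: "a \<in> Q" and b: "b \<in> Q" and "a \<noteq> b"
  shows "cyclic_quadruple (a \<cdot> b \<cdot> a) a (b \<cdot> a) b (a \<cdot> b)" and "a \<noteq> a \<cdot> b \<cdot> a"
proof -
  have "b \<cdot> a \<cdot> b = a \<cdot> b \<cdot> a" using quadratical_law[OF a b b] idem[OF b] by simp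
  then show "cyclic_quadruple (a \<cdot> b \<cdot> a) a (b \<cdot> a) b (a \<cdot> b)"
    unfolding cyclic_quadruple_def using flexible[OF a b] mul_rotate[OF b a] a b closed by auto
  show "a \<noteq> a \<cdot> b \<cdot> a"
  proof
    assume "a = a \<cdot> b \<cdot> a"
    then have "a \<cdot> a = a \<cdot> (b \<cdot> a)" using flexible[OF a b] idem[OF a] by simp
    then have "a \<cdot> a = b \<cdot> a" using left_cancel[OF a a closed[OF b a]] idem[OF a] by simp
    then show False using right_cancel[OF a a b] \<open>a \<noteq> b\<close> by simp
  qed
qed

lemma t_cyclic_quadruple:
  assumes "a \<in> Q" "b \<in> Q" "a \<noteq> b"
  shows "cyclic_quadruple (a \<cdot> b \<cdot> a) (t1 m a b (Suc n)) (t3 m a b (Suc n))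
           (t4 m a b (Suc n)) (t2 m a b (Suc n))
         \<and> t1 m a b (Suc n) \<noteq> a \<cdot> b \<cdot> a"
proof (induction n)
  case 0
  then show ?case using cyclic_quadruple_init[OF assms] by (simp add: t1_def t2_def t3_def t4_def)
next
  case (Suc n)
  then show ?case
    unfolding t_Suc_Suc using cyclic_quadruple_step cyclic_quadruple_step_ne by blast
qed

end

theorem proposition3p11:
  fixes Q :: "'a set" and m :: "'a \<Rightarrow> 'a \<Rightarrow> 'a" and a b :: 'a and t :: nat
  assumes "quadratical Q m" and "a \<in> Q" and "b \<in> Q" and "a \<noteq> b" and "t \<ge> 1"
  shows "distinct [t1 m a b t, t3 m a b t, t4 m a b t, t2 m a b t]
       \<and> m (t1 m a b t) (t3 m a b t) = m (m a b) a
       \<and> m (t3 m a b t) (t4 m a b t) = m (m a b) a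
       \<and> m (t4 m a b t) (t2 m a b t) = m (m a b) a
       \<and> m (t2 m a b t) (t1 m a b t) = m (m a b) a
       \<and> cycle_based_on m [t1 m a b t, t3 m a b t, t4 m a b t, t2 m a b t] (m (m a b) a)"
proof -
  interpret quadratical_quasigroup Q m by standard (fact assms(1))
  obtain n where t: "t = Suc n" using assms(5) by (cases t) auto
  have cq: "cyclic_quadruple (m (m a b) a) (t1 m a b t) (t3 m a b t) (t4 m a b t) (t2 m a b t)"
    and "t1 m a b t \<noteq> m (m a b) a"
    using t_cyclic_quadruple[OF assms(2-4)] t by auto
  then have "distinct [t1 m a b t, t3 m a b t, t4 m a b t, t2 m a b t]"
    by (rule cyclic_quadruple_distinct)
  with cq show ?thesis
    unfolding cycle_based_on_4 cyclic_quadruple_def by simp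
qed

end
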